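(* Let $\mathbf p=(p_1,p_2)^T\in\mathbb{Z}^2\setminus\{\mathbf0\}$ be such that $\kappa=\gcd(|p_1|,|p_2|)$ is odd. Then there exists a sequence of positive integers $N$ increasing without bound such that for each such $N$ and every $\mathbf a\in\mathcal D$, any two non-consecutive lattice points of $\Sigma'_{\mathbf a}$ cannot both lie in $D_{\mathbf p}$; i.e. if $\mathbf x,\mathbf y\in\Sigma'_{\mathbf a}\cap D_{\mathbf p}$ then $\mathbf y\in\{\mathbf x,\widehat{\mathbf x+\mathbf p},\widehat{\mathbf x-\mathbf p}\}$.
   Context: For a positive integer $N$: $\mathcal D=[-N,N]^2\cap\mathbb{Z}^2$; for $\mathbf k\in\mathbb{Z}^2$, $\widehat{\mathbf k}$ is the unique element of $\mathcal D$ with $\mathbf k-\widehat{\mathbf k}\in(2N+1)\mathbb{Z}^2$; $\Sigma'_{\mathbf a}=\{\widehat{\mathbf a+k\mathbf p}:k\in\mathbb{Z}\}$ for $\mathbf a\in\mathcal D$; and $D_{\mathbf p}=\{\mathbf x\in\mathcal D:|\mathbf x|<|\mathbf p|\}$. Here $\gcd(p_1,0)=|p_1|$. *)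

theory Defs
  imports Complex_Main
begin

type_synonym pt = "int \<times> int"

definition boxD :: "nat \<Rightarrow> pt set" where
  "boxD N = {x. \<bar>fst x\<bar> \<le> int N \<and> \<bar>snd x\<bar> \<le> int N}"

definition hat :: "nat \<Rightarrow> pt \<Rightarrow> pt" where
  "hat N k = (THE y. y \<in> boxD N \<and> (2 * int N + 1) dvd (fst k - fst y)
                                   \<and> (2 * int N + 1) dvd (snd k - snd y))"

definition padd :: "pt \<Rightarrow> pt \<Rightarrow> pt" where
  "padd x y = (fst x + fst y, snd x + snd y)"

definition pscale :: "int \<Rightarrow> pt \<Rightarrow> pt" where
  "pscale k x = (k * fst x, k * snd x)"

definition pnorm :: "pt \<Rightarrow> real" where
  "pnorm x = sqrt (real_of_int (fst x ^ 2 + snd x ^ 2))"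

definition Sigma' :: "nat \<Rightarrow> pt \<Rightarrow> pt \<Rightarrow> pt set" where
  "Sigma' N p a = {hat N (padd a (pscale k p)) | k. True}"

definition Dp :: "nat \<Rightarrow> pt \<Rightarrow> pt set" where
  "Dp N p = {x \<in> boxD N. pnorm x < pnorm p}"

end

theory Submission
  imports Defs
begin

text \<open>
  Choose \<open>N\<close> with \<open>2N + 1 = \<kappa> m\<close>, where \<open>\<kappa> = gcd p\<^sub>1 p\<^sub>2\<close> (this needs \<open>\<kappa>\<close> odd) and \<open>m \<ge> 2|p|\<^sup>2\<close>.
  Two points \<open>x, y\<close> of \<open>\<Sigma>'\<^sub>a\<close> satisfy \<open>y - x \<equiv> k p (mod \<kappa> m)\<close>. Writing \<open>p = \<kappa> q\<close>, the
  cross product \<open>(y - x) \<times> p\<close> is then divisible by \<open>\<kappa>\<^sup>2 m\<close>, while for \<open>x, y \<in> D\<^sub>p\<close> it is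
  smaller than \<open>2|p|\<^sup>2\<close> in absolute value; so it vanishes, and \<open>y - x\<close> is an integer multiple
  \<open>t p\<close>. Finally \<open>|t p| \<le> |x| + |y| < 2|p|\<close> forces \<open>t \<in> {-1, 0, 1}\<close>.
\<close>

lemma box_cong_unique:
  fixes a b :: int
  assumes "\<bar>a\<bar> \<le> int N" "\<bar>b\<bar> \<le> int N" "(2 * int N + 1) dvd (a - b)"
  shows "a = b"
proof (rule ccontr)
  assume "a \<noteq> b"
  then have "2 * int N + 1 \<le> \<bar>a - b\<bar>"
    using assms(3) dvd_imp_le_int[of "a - b" "2 * int N + 1"] by simp
  then show False using assms(1,2) by linarith
qed

lemma box_rep_exists: "\<exists>r::int. \<bar>r\<bar> \<le> int N \<and> (2 * int N + 1) dvd (z - r)"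
proof -
  define M where "M = 2 * int N + 1"
  define r where "r = (z + int N) mod M - int N"
  have "M > 0" unfolding M_def by simp
  then have "0 \<le> (z + int N) mod M" "(z + int N) mod M < M" by simp_all
  then have "\<bar>r\<bar> \<le> int N" unfolding r_def M_def by linarith
  moreover have "z - r = (z + int N) - (z + int N) mod M" unfolding r_def by simp
  then have "z - r = M * ((z + int N) div M)" by (simp add: minus_mod_eq_mult_div)
  ultimately show ?thesis unfolding M_def by (metis dvd_triv_left)
qed

lemma hat_in_boxD_cong:
  "hat N z \<in> boxD N \<and> (2 * int N + 1) dvd (fst z - fst (hat N z))
     \<and> (2 * int N + 1) dvd (snd z - snd (hat N z))"
proof -
  let ?P = "\<lambda>y. y \<in> boxD N \<and> (2 * int N + 1) dvd (fst z - fst y)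
                            \<and> (2 * int N + 1) dvd (snd z - snd y)"
  obtain r1 where r1: "\<bar>r1\<bar> \<le> int N" "(2 * int N + 1) dvd (fst z - r1)"
    using box_rep_exists by blast
  obtain r2 where r2: "\<bar>r2\<bar> \<le> int N" "(2 * int N + 1) dvd (snd z - r2)"
    using box_rep_exists by blast
  have "?P (r1, r2)" using r1 r2 unfolding boxD_def by simp
  moreover have "y = (r1, r2)" if "?P y" for y
  proof -
    have "fst y = r1" "snd y = r2"
      using that r1 r2 box_cong_unique[of "fst y" N r1] box_cong_unique[of "snd y" N r2]
        dvd_diff[of _ "fst z - r1" "fst z - fst y"] dvd_diff[of _ "snd z - r2" "snd z - snd y"]
      unfolding boxD_def by auto
    then show ?thesis by (simp add: prod_eq_iff)
  qed
  ultimately have "?P (THE y. ?P y)" by (rule theI)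
  then show ?thesis unfolding hat_def .
qed

lemma hat_eq_self:
  assumes "y \<in> boxD N"
  shows "hat N y = y"
proof -
  have "fst (hat N y) = fst y" "snd (hat N y) = snd y"
    using hat_in_boxD_cong[of N y] assms box_cong_unique[of "fst y" N "fst (hat N y)"]
      box_cong_unique[of "snd y" N "snd (hat N y)"]
    unfolding boxD_def by auto
  then show ?thesis by (simp add: prod_eq_iff)
qed

lemma Sigma'_diff_cong:
  assumes "x \<in> Sigma' N p a" "y \<in> Sigma' N p a"
  obtains k where "(2 * int N + 1) dvd (fst y - fst x - k * fst p)"
    and "(2 * int N + 1) dvd (snd y - snd x - k * snd p)"
proof -
  obtain kx ky where x: "x = hat N (padd a (pscale kx p))" and y: "y = hat N (padd a (pscale ky p))"
    using assms unfolding Sigma'_def by auto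
  have hx: "(2 * int N + 1) dvd (fst a + kx * fst p - fst x)"
    "(2 * int N + 1) dvd (snd a + kx * snd p - snd x)"
    using hat_in_boxD_cong[of N "padd a (pscale kx p)", folded x] by (simp_all add: padd_def pscale_def)
  have hy: "(2 * int N + 1) dvd (fst a + ky * fst p - fst y)"
    "(2 * int N + 1) dvd (snd a + ky * snd p - snd y)"
    using hat_in_boxD_cong[of N "padd a (pscale ky p)", folded y] by (simp_all add: padd_def pscale_def)
  have "fst y - fst x - (ky - kx) * fst p
      = (fst a + kx * fst p - fst x) - (fst a + ky * fst p - fst y)"
    by (simp add: algebra_simps)
  then have "(2 * int N + 1) dvd (fst y - fst x - (ky - kx) * fst p)"
    using dvd_diff[OF hx(1) hy(1)] by (simp only:)
  moreover have "snd y - snd x - (ky - kx) * snd p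
      = (snd a + kx * snd p - snd x) - (snd a + ky * snd p - snd y)"
    by (simp add: algebra_simps)
  then have "(2 * int N + 1) dvd (snd y - snd x - (ky - kx) * snd p)"
    using dvd_diff[OF hx(2) hy(2)] by (simp only:)
  ultimately show thesis by (rule that)
qed

lemma pnorm_less_iff: "pnorm x < pnorm y \<longleftrightarrow> fst x^2 + snd x^2 < fst y^2 + snd y^2"
  unfolding pnorm_def by (simp only: real_sqrt_less_iff of_int_less_iff)

lemma cong_multiple_parallel:
  fixes e1 e2 p1 p2 k m :: int
  assumes "(p1, p2) \<noteq> (0, 0)"
    and "gcd p1 p2 * m dvd (e1 - k * p1)" "gcd p1 p2 * m dvd (e2 - k * p2)"
    and "\<bar>e1 * p2 - e2 * p1\<bar> < m"
  shows "\<exists>t. e1 = t * p1 \<and> e2 = t * p2"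
proof -
  define \<kappa> where "\<kappa> = gcd p1 p2"
  have \<kappa>_pos: "\<kappa> > 0" using assms(1) unfolding \<kappa>_def by auto
  obtain q1 q2 where q: "p1 = \<kappa> * q1" "p2 = \<kappa> * q2"
    unfolding \<kappa>_def by (meson dvdE gcd_dvd1 gcd_dvd2)
  have "\<kappa> * gcd q1 q2 = \<kappa>"
    using gcd_mult_distrib_int[of \<kappa> q1 q2] \<kappa>_pos unfolding q[symmetric] \<kappa>_def[symmetric] by simp
  then obtain u v where uv: "u * q1 + v * q2 = 1"
    using \<kappa>_pos bezout_int[of q1 q2] by auto
  obtain w1 w2 where w: "e1 = k * p1 + \<kappa> * m * w1" "e2 = k * p2 + \<kappa> * m * w2"
    using assms(2,3) unfolding \<kappa>_def by (metis dvdE diff_eq_eq add.commute)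
  have cross: "e1 * p2 - e2 * p1 = (\<kappa> * \<kappa> * m) * (w1 * q2 - w2 * q1)"
    unfolding w q by (simp add: algebra_simps)
  have "w1 * q2 = w2 * q1"
  proof (rule ccontr)
    assume "w1 * q2 \<noteq> w2 * q1"
    then have "\<bar>\<kappa> * \<kappa> * m\<bar> \<le> \<bar>e1 * p2 - e2 * p1\<bar>"
      unfolding cross abs_mult[of "\<kappa> * \<kappa> * m"]
      by (intro mult_le_cancel_left1[THEN iffD2]) auto
    moreover have "1 * 1 \<le> \<kappa> * \<kappa>" using \<kappa>_pos by (intro mult_mono) auto
    then have "m \<le> \<kappa> * \<kappa> * m"
      using assms(4) abs_ge_zero[of "e1 * p2 - e2 * p1"] mult_right_mono[of 1 "\<kappa> * \<kappa>" m] by simp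
    ultimately show False using assms(4) by linarith
  qed
  then have par: "q1 * w2 = q2 * w1" by (simp add: mult.commute)
  define r where "r = u * w1 + v * w2"
  have "r * q1 = u * w1 * q1 + v * (w2 * q1)" unfolding r_def by (simp add: algebra_simps)
  also have "\<dots> = w1 * (u * q1 + v * q2)" using par by (simp add: algebra_simps)
  finally have w1_eq: "w1 = r * q1" using uv by simp
  have "r * q2 = u * (w1 * q2) + v * w2 * q2" unfolding r_def by (simp add: algebra_simps)
  also have "\<dots> = w2 * (u * q1 + v * q2)" using par by (simp add: algebra_simps)
  finally have w2_eq: "w2 = r * q2" using uv by simp
  show ?thesis
    using w1_eq w2_eq by (intro exI[of _ "k + m * r"]) (simp add: w q algebra_simps)
qed

lemma short_multiple_step:
  fixes x1 x2 p1 p2 t :: int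
  assumes "x1^2 + x2^2 < p1^2 + p2^2"
    and "(x1 + t * p1)^2 + (x2 + t * p2)^2 < p1^2 + p2^2"
  shows "\<bar>t\<bar> \<le> 1"
proof -
  define P where "P = p1^2 + p2^2"
  have "P > 0" using assms(1) unfolding P_def by (smt (verit) zero_le_power2)
  have "t^2 * P = (t * p1)^2 + (t * p2)^2"
    unfolding P_def by (simp add: power_mult_distrib algebra_simps)
  also have "\<dots> \<le> 2 * (x1^2 + x2^2) + 2 * ((x1 + t * p1)^2 + (x2 + t * p2)^2)"
    using zero_le_power2[of "2 * x1 + t * p1"] zero_le_power2[of "2 * x2 + t * p2"]
    by (simp add: power2_eq_square algebra_simps)
  also have "\<dots> < 4 * P" using add_strict_mono[OF assms] unfolding P_def by simp
  finally have "t^2 < 2^2" using \<open>P > 0\<close> by simp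
  then show ?thesis using power_less_imp_less_base[of "\<bar>t\<bar>" 2 2] by simp
qed

text \<open>Lagrange's identity \<open>(e \<times> p)\<^sup>2 + (e \<cdot> p)\<^sup>2 = |e|\<^sup>2 |p|\<^sup>2\<close> bounds the cross product.\<close>

lemma cross_bound_of_short:
  fixes x1 x2 y1 y2 p1 p2 :: int
  assumes "x1^2 + x2^2 < p1^2 + p2^2" "y1^2 + y2^2 < p1^2 + p2^2"
  shows "\<bar>(y1 - x1) * p2 - (y2 - x2) * p1\<bar> < 2 * (p1^2 + p2^2)"
proof -
  define P where "P = p1^2 + p2^2"
  define c where "c = (y1 - x1) * p2 - (y2 - x2) * p1"
  have "P > 0" using assms(1) unfolding P_def by (smt (verit) zero_le_power2)
  have "c^2 \<le> c^2 + ((y1 - x1) * p1 + (y2 - x2) * p2)^2" by simp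
  also have "\<dots> = ((y1 - x1)^2 + (y2 - x2)^2) * P"
    unfolding c_def P_def by (simp add: power2_eq_square algebra_simps)
  also have "\<dots> < (4 * P) * P"
  proof (rule mult_strict_right_mono[OF _ \<open>P > 0\<close>])
    show "(y1 - x1)^2 + (y2 - x2)^2 < 4 * P"
      using assms zero_le_power2[of "x1 + y1"] zero_le_power2[of "x2 + y2"]
      unfolding P_def by (simp add: power2_eq_square algebra_simps)
  qed
  finally have "c^2 < (2 * P)^2" by (simp add: power2_eq_square)
  then show ?thesis unfolding c_def[symmetric] P_def[symmetric]
    using power_less_imp_less_base[of "\<bar>c\<bar>" 2 "2 * P"] \<open>P > 0\<close> by simp
qed

lemma Sigma'_Dp_consecutive:
  assumes "p \<noteq> (0, 0)"
    and N: "2 * int N + 1 = gcd (fst p) (snd p) * m" "2 * (fst p^2 + snd p^2) \<le> m"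
    and x: "x \<in> Sigma' N p a \<inter> Dp N p" and y: "y \<in> Sigma' N p a \<inter> Dp N p"
  shows "y \<in> {x, hat N (padd x p), hat N (padd x (pscale (-1) p))}"
proof -
  obtain k where k: "(2 * int N + 1) dvd (fst y - fst x - k * fst p)"
    "(2 * int N + 1) dvd (snd y - snd x - k * snd p)"
    using Sigma'_diff_cong x y by blast
  have short: "fst x^2 + snd x^2 < fst p^2 + snd p^2" "fst y^2 + snd y^2 < fst p^2 + snd p^2"
    using x y pnorm_less_iff unfolding Dp_def by auto
  obtain t where t: "fst y - fst x = t * fst p" "snd y - snd x = t * snd p"
    using cong_multiple_parallel[of "fst p" "snd p" m "fst y - fst x" k "snd y - snd x"]
      assms(1) k cross_bound_of_short[OF short] N(2)
    by (auto simp: N(1) prod_eq_iff)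
  then have y_eq: "y = padd x (pscale t p)" by (simp add: padd_def pscale_def prod_eq_iff)
  have "fst y = fst x + t * fst p" "snd y = snd x + t * snd p" using t by simp_all
  then have "\<bar>t\<bar> \<le> 1" using short_multiple_step short by metis
  then have "t = 0 \<or> t = 1 \<or> t = -1" by auto
  moreover have "y \<in> boxD N" using y unfolding Dp_def by auto
  ultimately show ?thesis
    using y_eq hat_eq_self[of y N] by (auto simp: padd_def pscale_def)
qed

theorem lemma6:
  fixes p :: "int \<times> int"
  assumes "p \<noteq> (0, 0)"
    and "odd (gcd \<bar>fst p\<bar> \<bar>snd p\<bar>)"
  shows "\<exists>Ns :: nat \<Rightarrow> nat. strict_mono Ns \<and> (\<forall>i. 0 < Ns i) \<and>
           (\<forall>i. \<forall>a \<in> boxD (Ns i). \<forall>x y.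
              x \<in> Sigma' (Ns i) p a \<inter> Dp (Ns i) p \<and> y \<in> Sigma' (Ns i) p a \<inter> Dp (Ns i) p
              \<longrightarrow> y \<in> {x, hat (Ns i) (padd x p), hat (Ns i) (padd x (pscale (-1) p))})"
proof -
  define K where "K = nat (gcd (fst p) (snd p))"
  have K: "int K = gcd (fst p) (snd p)" unfolding K_def by simp
  have "odd K" using assms(2) unfolding K_def by (simp add: even_nat_iff)
  then obtain h where h: "K = 2 * h + 1" by (rule oddE)
  define c where "c = nat (fst p^2 + snd p^2)"
  define Ns where "Ns i = K * (i + c + 1) + h" for i
  have "2 * int (Ns i) + 1 = gcd (fst p) (snd p) * int (2 * (i + c + 1) + 1)" for i
    unfolding Ns_def K[symmetric] h by (simp add: algebra_simps)
  moreover have "2 * (fst p^2 + snd p^2) \<le> int (2 * (i + c + 1) + 1)" for i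
    unfolding c_def by simp
  moreover have "K > 0" using h by simp
  then have "strict_mono Ns" "0 < Ns i" for i
    unfolding strict_mono_def Ns_def by simp_all
  ultimately show ?thesis
    using Sigma'_Dp_consecutive[OF assms(1)] by blast
qed

end
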